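(* Let $r>1$ and let $N\ge1$, $K\ge2$ be integers. Let $\gamma^*(r,K,N)$ be the supremum of $$\sum_{i=1}^{K-1}\frac{z^i}{\sum_{j=i}^Kp^j}$$ over all $p=(p^1,\dots,p^K)$ with $p^K=1/r$, $\sum_{i=1}^Kp^i=1$, $p^i>0$ for all $i$, where $z^i=(\sum_{j=1}^ip^j)^N-(\sum_{j=1}^{i-1}p^j)^N$. Then $$\eta(r,K,N)=\frac{\gamma^*(r,K,N)}{\frac{r^N-(r-1)^N}{r^{N-1}}+\gamma^*(r,K,N)}.$$
   Context: Single item auction with $N$ buyers whose values are i.i.d., each taking values $0<x^1<\dots<x^K$ with probabilities $p^i>0$, $\sum_ip^i=1$. With $z^i$ as in the claim (the probability that the maximum value equals $x^i$) and reserve index $t(x,p)=\max\{i: i\in\arg\max_{1\le k\le K}x^k\sum_{j=k}^Kp^j\}$, the efficiency loss ratio of the welfare-maximizing revenue-optimal auction (which sells to the highest bidder if that bid is at least the common reserve price $x^{t}$) is $$\mathrm{ELR}_N(x,p)=\frac{\sum_{i=1}^{t(x,p)-1}z^ix^i}{\sum_{i=1}^Kz^ix^i}.$$ The worst case ELR $\eta(r,K,N)$ is the supremum of $\mathrm{ELR}_N(x,p)$ over all $p$ with $p^i>0$, $\sum_ip^i=1$, and all $x$ with $0<x^1<\dots<x^K\le rx^1$. *)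

theory Defs
  imports Complex_Main
begin

text \<open>Values x and probabilities p are indexed 1..K (functions nat => real; values
outside 1..K are irrelevant).\<close>

definition zprob :: "nat \<Rightarrow> (nat \<Rightarrow> real) \<Rightarrow> nat \<Rightarrow> real" where
  "zprob N p i = (\<Sum>j=1..i. p j) ^ N - (\<Sum>j=1..<i. p j) ^ N"

definition revenue :: "nat \<Rightarrow> (nat \<Rightarrow> real) \<Rightarrow> (nat \<Rightarrow> real) \<Rightarrow> nat \<Rightarrow> real" where
  "revenue K x p k = x k * (\<Sum>j=k..K. p j)"

definition reserve_index :: "nat \<Rightarrow> (nat \<Rightarrow> real) \<Rightarrow> (nat \<Rightarrow> real) \<Rightarrow> nat" where
  "reserve_index K x p =
     Max {i \<in> {1..K}. \<forall>k\<in>{1..K}. revenue K x p k \<le> revenue K x p i}"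

definition ELR :: "nat \<Rightarrow> nat \<Rightarrow> (nat \<Rightarrow> real) \<Rightarrow> (nat \<Rightarrow> real) \<Rightarrow> real" where
  "ELR N K x p =
     (\<Sum>i=1..<reserve_index K x p. zprob N p i * x i) / (\<Sum>i=1..K. zprob N p i * x i)"

definition valid_prob :: "nat \<Rightarrow> (nat \<Rightarrow> real) \<Rightarrow> bool" where
  "valid_prob K p \<longleftrightarrow> (\<forall>i\<in>{1..K}. p i > 0) \<and> (\<Sum>i=1..K. p i) = 1"

definition valid_vals :: "real \<Rightarrow> nat \<Rightarrow> (nat \<Rightarrow> real) \<Rightarrow> bool" where
  "valid_vals r K x \<longleftrightarrow> 0 < x 1 \<and> (\<forall>i\<in>{1..<K}. x i < x (Suc i)) \<and> x K \<le> r * x 1"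

definition eta :: "real \<Rightarrow> nat \<Rightarrow> nat \<Rightarrow> real" where
  "eta r K N = Sup {ELR N K x p | x p. valid_prob K p \<and> valid_vals r K x}"

definition gamma_star :: "real \<Rightarrow> nat \<Rightarrow> nat \<Rightarrow> real" where
  "gamma_star r K N = Sup {(\<Sum>i=1..K-1. zprob N p i / (\<Sum>j=i..K. p j)) | p.
      valid_prob K p \<and> p K = 1 / r}"

end

theory Submission imports Defs begin

text \<open>
Write \<open>u = 1/r = p\<^sub>K\<close>, \<open>T\<^sub>i = p\<^sub>i + \<dots> + p\<^sub>K\<close>, \<open>G\<^sub>t = \<Sum>\<^sub>i\<^sub><\<^sub>t z\<^sub>i/T\<^sub>i\<close> and
\<open>c = (1 - (1-u)\<^sup>N)/u = (r\<^sup>N - (r-1)\<^sup>N)/r\<^sup>N\<^sup>-\<^sup>1\<close>.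
The values \<open>x\<^sub>i = u/T\<^sub>i\<close> give every reserve the same revenue \<open>u\<close>, so the top value is the reserve
and the efficiency loss ratio is \<open>G\<^sub>K/(G\<^sub>K + c)\<close>; this gives \<open>\<eta> \<ge> \<gamma>*/(\<gamma>* + c)\<close>.
Conversely, let \<open>t\<close> be the reserve index and \<open>s = T\<^sub>t\<close>, so \<open>s \<ge> u\<close>. Revenue optimality gives
\<open>x\<^sub>i \<le> x\<^sub>t s/T\<^sub>i\<close> for \<open>i < t\<close>, whence the ratio is at most \<open>sG\<^sub>t/(sG\<^sub>t + 1 - (1-s)\<^sup>N)\<close>.
Scaling \<open>p\<^sub>1,\<dots>,p\<^sub>t\<^sub>-\<^sub>1\<close> by \<open>\<lambda> = (1-u)/(1-s)\<close> and putting them below a top atom of mass \<open>u\<close>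
yields an admissible distribution with \<open>G\<^sub>K \<ge> \<lambda>\<^sup>N G\<^sub>t\<close>, and \<open>s c \<le> (1 - (1-s)\<^sup>N) \<lambda>\<^sup>N\<close>
because \<open>(1 - w\<^sup>N)/((1-w) w\<^sup>N)\<close> decreases in \<open>w\<close>. Together, the ratio is at most \<open>\<gamma>*/(\<gamma>* + c)\<close>.\<close>

definition mass_below :: "(nat \<Rightarrow> real) \<Rightarrow> nat \<Rightarrow> real" where
  "mass_below p i = (\<Sum>j=1..<i. p j)"

definition gamma_sum :: "nat \<Rightarrow> nat \<Rightarrow> (nat \<Rightarrow> real) \<Rightarrow> nat \<Rightarrow> real" where
  "gamma_sum N K p n = (\<Sum>i=1..<n. zprob N p i / (\<Sum>j=i..K. p j))"

definition gamma_values :: "real \<Rightarrow> nat \<Rightarrow> nat \<Rightarrow> real set" where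
  "gamma_values r K N = {gamma_sum N K p K | p. valid_prob K p \<and> p K = 1 / r}"

lemma zprob_eq_mass_below: "zprob N p i = mass_below p (Suc i) ^ N - mass_below p i ^ N"
  unfolding zprob_def mass_below_def by (simp add: atLeastLessThanSuc_atLeastAtMost)

lemma mass_below_Suc: "i \<ge> 1 \<Longrightarrow> mass_below p (Suc i) = mass_below p i + p i"
  unfolding mass_below_def by (simp add: sum.atLeastLessThan_Suc)

lemma mass_below_0 [simp]: "mass_below p 0 = 0"
  and mass_below_1 [simp]: "mass_below p (Suc 0) = 0"
  unfolding mass_below_def by auto

lemma mass_below_2: "mass_below p 2 = p 1"
  using mass_below_Suc[of 1 p] by (simp add: numeral_2_eq_2)

lemma mass_below_split:
  assumes "1 \<le> i" "i \<le> j"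
  shows "mass_below p j = mass_below p i + (\<Sum>k=i..<j. p k)"
proof -
  have "{1..<j} = {1..<i} \<union> {i..<j}" using assms by auto
  then show ?thesis unfolding mass_below_def by (simp add: sum.union_disjoint ivl_disj_int)
qed

lemma mass_below_mono:
  assumes "valid_prob K p" "i \<le> j" "j \<le> Suc K"
  shows "mass_below p i \<le> mass_below p j"
proof -
  have "mass_below p i' \<le> mass_below p j" if "1 \<le> i'" "i' \<le> j" for i'
  proof -
    have "(\<Sum>k=i'..<j. p k) \<ge> 0"
      using assms that unfolding valid_prob_def by (intro sum_nonneg) (auto intro: less_imp_le)
    then show ?thesis using mass_below_split[OF that, of p] by linarith
  qed
  from this[of i] this[of 1] show ?thesis using assms by (cases i; cases j) auto
qed

lemma mass_below_nonneg: "valid_prob K p \<Longrightarrow> j \<le> Suc K \<Longrightarrow> mass_below p j \<ge> 0"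
  using mass_below_mono[of K p 0 j] by simp

lemma mass_below_total: "valid_prob K p \<Longrightarrow> mass_below p (Suc K) = 1"
  unfolding mass_below_def valid_prob_def by (simp add: atLeastLessThanSuc_atLeastAtMost)

lemma tail_mass_eq:
  assumes "valid_prob K p" "1 \<le> i" "i \<le> Suc K"
  shows "(\<Sum>j=i..K. p j) = 1 - mass_below p i"
  using mass_below_split[OF assms(2,3), of p] mass_below_total[OF assms(1)]
  by (simp add: atLeastLessThanSuc_atLeastAtMost)

lemma tail_mass_pos:
  assumes "valid_prob K p" "1 \<le> i" "i \<le> K"
  shows "(\<Sum>j=i..K. p j) > 0"
  using assms unfolding valid_prob_def by (intro sum_pos) auto

lemma zprob_nonneg:
  assumes "valid_prob K p" "i \<le> K"
  shows "zprob N p i \<ge> 0"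
  unfolding zprob_eq_mass_below
  using mass_below_mono[OF assms(1), of i "Suc i"] mass_below_nonneg[OF assms(1), of i] assms
  by (simp add: power_mono)

lemma sum_zprob_telescope:
  "a \<le> b \<Longrightarrow> (\<Sum>i=a..<b. zprob N p i) = mass_below p b ^ N - mass_below p a ^ N"
  unfolding zprob_eq_mass_below using sum_Suc_diff'[of a b "\<lambda>i. mass_below p i ^ N"] by simp

lemma gamma_sum_nonneg:
  assumes "valid_prob K p" "n \<le> Suc K"
  shows "gamma_sum N K p n \<ge> 0"
  unfolding gamma_sum_def using assms
  by (intro sum_nonneg divide_nonneg_pos zprob_nonneg[OF assms(1)] tail_mass_pos[OF assms(1)]) auto

lemma gamma_sum_le:
  assumes vp: "valid_prob K p" and "p K = u" "u > 0" "K \<ge> 1"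
  shows "gamma_sum N K p K \<le> 1 / u"
proof -
  have "gamma_sum N K p K \<le> (\<Sum>i=1..<K. zprob N p i / u)" unfolding gamma_sum_def
  proof (intro sum_mono divide_left_mono)
    fix i assume i: "i \<in> {1..<K}"
    show "zprob N p i \<ge> 0" using zprob_nonneg[OF vp] i by simp
    have "mass_below p i \<le> mass_below p K" using mass_below_mono[OF vp] i by simp
    then show "u \<le> (\<Sum>j=i..K. p j)"
      using tail_mass_eq[OF vp, of i] tail_mass_eq[OF vp, of K] i assms by simp
    show "0 < (\<Sum>j=i..K. p j) * u" using tail_mass_pos[OF vp, of i] i assms by simp
  qed
  also have "\<dots> = (mass_below p K ^ N - mass_below p 1 ^ N) / u"
    using sum_zprob_telescope[of 1 K N p] assms by (simp add: sum_divide_distrib[symmetric])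
  also have "\<dots> \<le> 1 / u"
  proof -
    have "mass_below p K \<le> 1" "mass_below p K \<ge> 0"
      using mass_below_mono[OF vp, of K "Suc K"] mass_below_total[OF vp]
        mass_below_nonneg[OF vp, of K] by auto
    then have "mass_below p K ^ N \<le> 1" by (intro power_le_one)
    then have "mass_below p K ^ N - mass_below p 1 ^ N \<le> 1" by (cases N) auto
    then show ?thesis using assms by (intro divide_right_mono) auto
  qed
  finally show ?thesis .
qed

lemma one_minus_power_pos: "0 < s \<Longrightarrow> s \<le> 1 \<Longrightarrow> N \<ge> 1 \<Longrightarrow> 1 - (1 - s) ^ N > (0::real)"
  using power_decreasing[of 1 N "1 - s"] by simp

text \<open>Equivalently, \<open>(1 - w\<^sup>N)/((1 - w) w\<^sup>N) = \<Sum>k<N. w\<^sup>k\<^sup>-\<^sup>N\<close> is decreasing in \<open>w\<close>.\<close>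

lemma one_minus_power_cross_le:
  fixes w w' :: real
  assumes "0 \<le> w" "w \<le> w'" "w' < 1"
  shows "(1 - w' ^ N) * (1 - w) * w ^ N \<le> (1 - w') * (1 - w ^ N) * w' ^ N"
proof -
  have term_le: "w' ^ k * w ^ N \<le> w ^ k * w' ^ N" if "k < N" for k
  proof -
    have "w' ^ k * w ^ N = w' ^ k * w ^ k * w ^ (N - k)" using that by (simp add: power_add[symmetric])
    also have "\<dots> \<le> w' ^ k * w ^ k * w' ^ (N - k)"
      using assms by (intro mult_left_mono power_mono) auto
    also have "\<dots> = w ^ k * w' ^ N" using that by (simp add: power_add[symmetric] mult_ac)
    finally show ?thesis .
  qed
  have "(\<Sum>k<N. w' ^ k) * w ^ N \<le> (\<Sum>k<N. w ^ k) * w' ^ N"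
    using sum_mono[of "{..<N}", OF term_le] by (simp add: sum_distrib_right)
  then have "((1 - w') * (1 - w)) * ((\<Sum>k<N. w' ^ k) * w ^ N)
           \<le> ((1 - w') * (1 - w)) * ((\<Sum>k<N. w ^ k) * w' ^ N)"
    using assms by (intro mult_left_mono) auto
  then show ?thesis
    unfolding one_diff_power_eq[of w' N] one_diff_power_eq[of w N] by (simp add: mult_ac)
qed

lemma frac_add_le_frac_add:
  fixes a b g c :: real
  assumes "a \<ge> 0" "g \<ge> 0" "b > 0" "c > 0" "a * c \<le> g * b"
  shows "a / (a + b) \<le> g / (g + c)"
proof -
  have "a * (g + c) \<le> g * (a + b)" using assms by (simp add: algebra_simps)
  then show ?thesis using assms by (simp add: divide_simps)
qed

lemma power_diff_div_power_eq:
  fixes r :: real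
  assumes "r > 0" "N \<ge> 1"
  shows "(r ^ N - (r - 1) ^ N) / r ^ (N - 1) = (1 - (1 - 1 / r) ^ N) / (1 / r)"
proof -
  have "r ^ N = r * r ^ (N - 1)" using assms by (simp add: power_eq_if)
  moreover have "1 - 1 / r = (r - 1) / r" using assms by (simp add: field_simps)
  then have "(1 - 1 / r) ^ N = (r - 1) ^ N / r ^ N" by (simp add: power_divide)
  ultimately show ?thesis using assms by (simp add: field_simps)
qed

lemma Sup_eq_frac_Sup:
  fixes G E :: "real set" and c :: real
  assumes c: "c > 0" and G: "G \<noteq> {}" "bdd_above G" "\<And>g. g \<in> G \<Longrightarrow> g \<ge> 0"
    and upper: "\<And>e. e \<in> E \<Longrightarrow> e \<le> Sup G / (Sup G + c)"
    and lower: "\<And>g. g \<in> G \<Longrightarrow> g / (g + c) \<in> E"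
  shows "Sup E = Sup G / (Sup G + c)"
proof -
  obtain g0 where "g0 \<in> G" using G by blast
  have "g0 \<le> Sup G" using \<open>g0 \<in> G\<close> G by (intro cSup_upper)
  then have G0: "Sup G \<ge> 0" using G(3)[OF \<open>g0 \<in> G\<close>] by simp
  have E: "E \<noteq> {}" "bdd_above E" using lower[OF \<open>g0 \<in> G\<close>] upper by (auto simp: bdd_above_def)
  have Sup_E_le: "Sup E \<le> Sup G / (Sup G + c)" using E upper by (intro cSup_least)
  also have "\<dots> < 1" using G0 c by simp
  finally have Sup_E_lt1: "Sup E < 1" .
  have "g \<le> Sup E * c / (1 - Sup E)" if "g \<in> G" for g
  proof -
    have "g / (g + c) \<le> Sup E" using lower[OF that] E by (intro cSup_upper)
    then show ?thesis using G(3)[OF that] c Sup_E_lt1 by (simp add: field_simps)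
  qed
  then have "Sup G \<le> Sup E * c / (1 - Sup E)" using G by (intro cSup_least) auto
  then have "Sup G / (Sup G + c) \<le> Sup E" using G0 c Sup_E_lt1 by (simp add: field_simps)
  then show ?thesis using Sup_E_le by simp
qed

subsection \<open>The reserve index\<close>

lemma reserve_index_maximal:
  assumes "K \<ge> 1"
  shows "reserve_index K x p \<in> {i \<in> {1..K}. \<forall>k\<in>{1..K}. revenue K x p k \<le> revenue K x p i}"
proof -
  let ?S = "{i \<in> {1..K}. \<forall>k\<in>{1..K}. revenue K x p k \<le> revenue K x p i}"
  have "Max (revenue K x p ` {1..K}) \<in> revenue K x p ` {1..K}"
    using assms by (intro Max_in) auto
  then obtain i0 where "i0 \<in> {1..K}" "revenue K x p i0 = Max (revenue K x p ` {1..K})"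
    by auto
  then have "i0 \<in> ?S" by simp
  then have "Max ?S \<in> ?S" by (intro Max_in) auto
  then show ?thesis unfolding reserve_index_def .
qed

lemma valid_vals_mono:
  assumes "valid_vals r K x" "1 \<le> i" "i \<le> j" "j \<le> K"
  shows "x i \<le> x j"
  using assms(3,4)
proof (induction j rule: dec_induct)
  case (step j)
  then have "x j < x (Suc j)" using assms(1,2) unfolding valid_vals_def by auto
  with step show ?case by simp
qed simp

lemma reserve_tail_mass_ge:
  assumes vp: "valid_prob K p" and vv: "valid_vals r K x" and "K \<ge> 1"
  defines "t \<equiv> reserve_index K x p"
  shows "1 \<le> r * (\<Sum>j=t..K. p j)"
proof -
  have t: "t \<in> {1..K}" "revenue K x p 1 \<le> revenue K x p t"
    using reserve_index_maximal[of K x p] assms unfolding t_def by auto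
  have x1: "x 1 > 0" "x K \<le> r * x 1" using vv unfolding valid_vals_def by auto
  have "x 1 \<le> x t * (\<Sum>j=t..K. p j)"
    using t vp unfolding revenue_def valid_prob_def by simp
  also have "\<dots> \<le> r * x 1 * (\<Sum>j=t..K. p j)"
    using valid_vals_mono[OF vv, of t K] t x1 tail_mass_pos[OF vp, of t]
    by (intro mult_right_mono) auto
  finally show ?thesis using x1 by (simp add: mult_ac)
qed

lemma lost_welfare_le:
  fixes x :: "nat \<Rightarrow> real"
  assumes vp: "valid_prob K p" and "K \<ge> 1"
  defines "t \<equiv> reserve_index K x p"
  shows "(\<Sum>i=1..<t. zprob N p i * x i) \<le> x t * (\<Sum>j=t..K. p j) * gamma_sum N K p t"
proof -
  have t: "t \<in> {1..K}" and rmax: "\<And>k. k \<in> {1..K} \<Longrightarrow> revenue K x p k \<le> revenue K x p t"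
    using reserve_index_maximal[of K x p] assms unfolding t_def by auto
  have "(\<Sum>i=1..<t. zprob N p i * x i)
      \<le> (\<Sum>i=1..<t. zprob N p i * (x t * (\<Sum>j=t..K. p j) / (\<Sum>j=i..K. p j)))"
  proof (intro sum_mono mult_left_mono)
    fix i assume i: "i \<in> {1..<t}"
    show "x i \<le> x t * (\<Sum>j=t..K. p j) / (\<Sum>j=i..K. p j)"
      using rmax[of i] i t tail_mass_pos[OF vp, of i] unfolding revenue_def by (simp add: divide_simps)
    show "zprob N p i \<ge> 0" using zprob_nonneg[OF vp] i t by auto
  qed
  also have "\<dots> = x t * (\<Sum>j=t..K. p j) * gamma_sum N K p t"
    unfolding gamma_sum_def sum_distrib_left by (intro sum.cong) auto
  finally show ?thesis .
qed

text \<open>\<open>1 - (1-s)\<^sup>N\<close> is the probability that the highest value reaches the reserve.\<close>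

lemma retained_welfare_ge:
  assumes vp: "valid_prob K p" and vv: "valid_vals r K x" and "K \<ge> 1"
  defines "t \<equiv> reserve_index K x p"
  shows "x t * (1 - (1 - (\<Sum>j=t..K. p j)) ^ N) \<le> (\<Sum>i=t..K. zprob N p i * x i)"
proof -
  have t: "t \<in> {1..K}" using reserve_index_maximal[of K x p] assms unfolding t_def by auto
  have "(\<Sum>i=t..K. zprob N p i) = 1 - (1 - (\<Sum>j=t..K. p j)) ^ N"
    using sum_zprob_telescope[of t "Suc K" N p] t mass_below_total[OF vp] tail_mass_eq[OF vp, of t]
    by (simp add: atLeastLessThanSuc_atLeastAtMost)
  then have "x t * (1 - (1 - (\<Sum>j=t..K. p j)) ^ N) = (\<Sum>i=t..K. zprob N p i * x t)"
    by (simp add: sum_distrib_left[symmetric] mult.commute[of _ "x t"])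
  also have "\<dots> \<le> (\<Sum>i=t..K. zprob N p i * x i)"
    using valid_vals_mono[OF vv] zprob_nonneg[OF vp] t by (intro sum_mono mult_left_mono) auto
  finally show ?thesis .
qed

lemma ELR_le_reserve_bound:
  assumes vp: "valid_prob K p" and vv: "valid_vals r K x" and "N \<ge> 1" "K \<ge> 1"
  defines "t \<equiv> reserve_index K x p"
  defines "s \<equiv> (\<Sum>j=t..K. p j)"
  shows "ELR N K x p \<le> s * gamma_sum N K p t / (s * gamma_sum N K p t + (1 - (1 - s) ^ N))"
proof -
  define A where "A = (\<Sum>i=1..<t. zprob N p i * x i)"
  define B where "B = (\<Sum>i=t..K. zprob N p i * x i)"
  have t: "t \<in> {1..K}" using reserve_index_maximal[of K x p] assms unfolding t_def by auto
  have s: "0 < s" "s \<le> 1"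
    using tail_mass_pos[OF vp, of t] tail_mass_eq[OF vp, of t] mass_below_nonneg[OF vp, of t] t
    unfolding s_def by auto
  have D: "1 - (1 - s) ^ N > 0" using one_minus_power_pos[of s N] s assms by auto
  have x: "x t > 0" "\<And>i. i \<in> {1..K} \<Longrightarrow> x i \<ge> 0"
    using valid_vals_mono[OF vv, of 1] t vv unfolding valid_vals_def by force+
  have "{1..K} = {1..<t} \<union> {t..K}" using t by auto
  then have "ELR N K x p = A / (A + B)"
    unfolding ELR_def A_def B_def t_def by (simp add: sum.union_disjoint ivl_disj_int)
  also have "\<dots> \<le> x t * s * gamma_sum N K p t
        / (x t * s * gamma_sum N K p t + x t * (1 - (1 - s) ^ N))"
  proof (rule frac_add_le_frac_add)
    have A_le: "A \<le> x t * s * gamma_sum N K p t"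
      using lost_welfare_le[OF vp] assms unfolding A_def s_def t_def by simp
    have B_ge: "x t * (1 - (1 - s) ^ N) \<le> B"
      using retained_welfare_ge[OF vp vv] assms unfolding B_def s_def t_def by simp
    show "A \<ge> 0" unfolding A_def using t x zprob_nonneg[OF vp]
      by (intro sum_nonneg mult_nonneg_nonneg) auto
    show "A * (x t * (1 - (1 - s) ^ N)) \<le> x t * s * gamma_sum N K p t * B"
      using A_le B_ge \<open>A \<ge> 0\<close> D s x by (intro mult_mono) auto
    show "B > 0" using B_ge D x by (smt (verit) mult_pos_pos)
  qed (use x s gamma_sum_nonneg[OF vp, of t N] t D in auto)
  also have "\<dots> = s * gamma_sum N K p t / (s * gamma_sum N K p t + (1 - (1 - s) ^ N))"
    using x by (simp add: distrib_left[symmetric] mult.assoc)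
  finally show ?thesis .
qed

subsection \<open>Moving the mass below the reserve to the top\<close>

text \<open>Scale \<open>p\<^sub>1,\<dots>,p\<^sub>t\<^sub>-\<^sub>1\<close> by \<open>\<lambda>\<close>, spread the scaled \<open>p\<^sub>1\<close> evenly over the first \<open>K - t + 1\<close> atoms,
place the scaled \<open>p\<^sub>2,\<dots>,p\<^sub>t\<^sub>-\<^sub>1\<close> on the atoms just below \<open>K\<close>, and give atom \<open>K\<close> the mass \<open>u\<close>.\<close>

definition stretch_prob :: "nat \<Rightarrow> nat \<Rightarrow> real \<Rightarrow> real \<Rightarrow> (nat \<Rightarrow> real) \<Rightarrow> nat \<Rightarrow> real" where
  "stretch_prob K t lam u p j =
     (if j \<le> Suc (K - t) then lam * p 1 / real (Suc (K - t))
      else if j < K then lam * p (j - (K - t)) else u)"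

lemma stretch_prob_last: "2 \<le> t \<Longrightarrow> t \<le> K \<Longrightarrow> stretch_prob K t lam u p K = u"
  unfolding stretch_prob_def by auto

lemma mass_below_stretch_head:
  assumes "i \<le> K - t + 2"
  shows "mass_below (stretch_prob K t lam u p) i = real (i - 1) * (lam * p 1 / real (Suc (K - t)))"
  using assms
proof (induction i)
  case (Suc i)
  show ?case
  proof (cases "i = 0")
    case False
    have "stretch_prob K t lam u p i = lam * p 1 / real (Suc (K - t))"
      using Suc.prems by (simp add: stretch_prob_def)
    then show ?thesis
      using mass_below_Suc[of i "stretch_prob K t lam u p"] Suc False
      by (cases i) (auto simp: algebra_simps add_divide_distrib)
  qed simp
qed simp

lemma mass_below_stretch_tail:
  assumes "K - t + 2 \<le> i" "i \<le> K"
  shows "mass_below (stretch_prob K t lam u p) i = lam * mass_below p (i - (K - t))"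
  using assms
proof (induction i rule: dec_induct)
  case base
  then show ?case using mass_below_stretch_head[of "K - t + 2" K t lam u p] mass_below_2[of p]
    by simp
next
  case (step n)
  then have "mass_below p (Suc n - (K - t)) = mass_below p (n - (K - t)) + p (n - (K - t))"
    using mass_below_Suc[of "n - (K - t)" p] by (simp add: Suc_diff_le)
  moreover have "stretch_prob K t lam u p n = lam * p (n - (K - t))"
    using step by (simp add: stretch_prob_def)
  ultimately show ?case
    using step mass_below_Suc[of n "stretch_prob K t lam u p"] by (simp add: algebra_simps)
qed

lemma valid_prob_stretch:
  assumes vp: "valid_prob K p" and t: "2 \<le> t" "t \<le> K" and "u > 0" "lam > 0"
    and lam: "lam * mass_below p t = 1 - u"
  shows "valid_prob K (stretch_prob K t lam u p)"
proof -
  let ?q = "stretch_prob K t lam u p"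
  have "?q j > 0" if j: "j \<in> {1..K}" for j
  proof -
    have "p (j - (K - t)) > 0" if "Suc (K - t) < j"
    proof -
      have "j - (K - t) \<in> {1..K}" using j that by auto
      then show ?thesis using vp unfolding valid_prob_def by blast
    qed
    then show ?thesis using vp assms unfolding valid_prob_def stretch_prob_def by auto
  qed
  moreover have "mass_below ?q (Suc K) = 1"
  proof -
    have "mass_below ?q K = lam * mass_below p t" "?q K = u"
      using mass_below_stretch_tail[of K t K lam u p] stretch_prob_last t by auto
    then show ?thesis using mass_below_Suc[of K ?q] t lam by (simp add: algebra_simps)
  qed
  ultimately show ?thesis
    unfolding valid_prob_def mass_below_def by (simp add: atLeastLessThanSuc_atLeastAtMost)
qed

lemma sum_zprob_stretch_head:
  "N \<ge> 1 \<Longrightarrow> (\<Sum>i=1..<K-t+2. zprob N (stretch_prob K t lam u p) i) = (lam * p 1) ^ N"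
  using sum_zprob_telescope[of 1 "K - t + 2" N "stretch_prob K t lam u p"]
    mass_below_stretch_head[of "K - t + 2" K t lam u p] by simp

lemma zprob_stretch_shift:
  assumes "k \<in> {2..<t}" "t \<le> K"
  shows "zprob N (stretch_prob K t lam u p) (K - t + k) = lam ^ N * zprob N p k"
proof -
  have "mass_below (stretch_prob K t lam u p) (K - t + k) = lam * mass_below p k"
    "mass_below (stretch_prob K t lam u p) (Suc (K - t + k)) = lam * mass_below p (Suc k)"
    using mass_below_stretch_tail[of K t "K - t + k" lam u p]
      mass_below_stretch_tail[of K t "Suc (K - t + k)" lam u p] assms by auto
  then show ?thesis unfolding zprob_eq_mass_below by (simp add: power_mult_distrib right_diff_distrib)
qed

lemma zprob_le_div_tail_mass:
  assumes vp: "valid_prob K p" and "1 \<le> i" "i \<le> K"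
  shows "zprob N p i \<le> zprob N p i / (\<Sum>j=i..K. p j)"
proof -
  have "(\<Sum>j=i..K. p j) \<le> 1" using tail_mass_eq[OF vp] mass_below_nonneg[OF vp, of i] assms by simp
  then show ?thesis
    using zprob_nonneg[OF vp, of i] tail_mass_pos[OF vp] assms by (simp add: divide_simps mult_left_le)
qed

text \<open>On the first \<open>K - t + 1\<close> atoms the tail masses are at most one; on the shifted atoms they
shrink, since \<open>1 - \<lambda> L \<le> 1 - L\<close>, while the \<open>z\<close>-increments grow by exactly \<open>\<lambda>\<^sup>N\<close>.\<close>

lemma gamma_sum_stretch_ge:
  assumes vp: "valid_prob K p" and t: "2 \<le> t" "t \<le> K" and "u > 0" "lam \<ge> 1" "N \<ge> 1"
    and lam: "lam * mass_below p t = 1 - u"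
  defines "q \<equiv> stretch_prob K t lam u p"
  shows "lam ^ N * gamma_sum N K p t \<le> gamma_sum N K q K"
proof -
  define m where "m = K - t"
  have Km: "K = t + m" using t unfolding m_def by simp
  have vq: "valid_prob K q" unfolding q_def using valid_prob_stretch[OF vp t] assms by simp
  have "lam ^ N * p 1 ^ N = (\<Sum>i=1..<m+2. zprob N q i)"
    using sum_zprob_stretch_head[OF \<open>N \<ge> 1\<close>, of K t lam u p]
    unfolding q_def m_def by (simp add: power_mult_distrib)
  also have "\<dots> \<le> (\<Sum>i=1..<m+2. zprob N q i / (\<Sum>j=i..K. q j))"
    using zprob_le_div_tail_mass[OF vq] Km t by (intro sum_mono) auto
  finally have head: "lam ^ N * p 1 ^ N \<le> (\<Sum>i=1..<m+2. zprob N q i / (\<Sum>j=i..K. q j))" .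
  have shifted: "lam ^ N * (zprob N p k / (\<Sum>j=k..K. p j))
      \<le> zprob N q (m + k) / (\<Sum>j=m+k..K. q j)" if k: "k \<in> {2..<t}" for k
  proof -
    have kK: "1 \<le> k" "k \<le> K" "1 \<le> m + k" "m + k \<le> K" using k Km by auto
    have "mass_below q (m + k) = lam * mass_below p k"
      using mass_below_stretch_tail[of K t "m + k" lam u p] kK k unfolding q_def m_def by auto
    moreover have "mass_below p k \<le> lam * mass_below p k"
      using mass_below_nonneg[OF vp, of k] kK \<open>lam \<ge> 1\<close> by (simp add: mult_le_cancel_right1)
    ultimately have "(\<Sum>j=m+k..K. q j) \<le> (\<Sum>j=k..K. p j)"
      using tail_mass_eq[OF vq, of "m + k"] tail_mass_eq[OF vp, of k] kK by simp
    then have "zprob N p k / (\<Sum>j=k..K. p j) \<le> zprob N p k / (\<Sum>j=m+k..K. q j)"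
      using zprob_nonneg[OF vp, of k] tail_mass_pos[OF vq, of "m + k"] kK
      by (intro divide_left_mono) auto
    then have "lam ^ N * (zprob N p k / (\<Sum>j=k..K. p j))
        \<le> lam ^ N * (zprob N p k / (\<Sum>j=m+k..K. q j))"
      using \<open>lam \<ge> 1\<close> by (intro mult_left_mono) auto
    then show ?thesis using zprob_stretch_shift[OF k t(2)] unfolding q_def m_def by simp
  qed
  have p_split: "gamma_sum N K p t = p 1 ^ N + (\<Sum>k=2..<t. zprob N p k / (\<Sum>j=k..K. p j))"
  proof -
    have "{1..<t} = insert 1 {2..<t}" using t by auto
    then show ?thesis using vp assms unfolding gamma_sum_def valid_prob_def zprob_def by simp
  qed
  have q_split: "gamma_sum N K q K = (\<Sum>i=1..<m+2. zprob N q i / (\<Sum>j=i..K. q j))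
      + (\<Sum>k=2..<t. zprob N q (m + k) / (\<Sum>j=m+k..K. q j))"
  proof -
    have "gamma_sum N K q K = (\<Sum>i=1..<m+2. zprob N q i / (\<Sum>j=i..K. q j))
        + (\<Sum>i=m+2..<K. zprob N q i / (\<Sum>j=i..K. q j))"
      unfolding gamma_sum_def using Km t by (intro sum.atLeastLessThan_concat[symmetric]) auto
    then show ?thesis
      using sum.atLeastLessThan_shift_bounds[of "\<lambda>i. zprob N q i / (\<Sum>j=i..K. q j)" 2 m t] Km
      by (simp add: add.commute comp_def)
  qed
  have "lam ^ N * gamma_sum N K p t
      = lam ^ N * p 1 ^ N + (\<Sum>k=2..<t. lam ^ N * (zprob N p k / (\<Sum>j=k..K. p j)))"
    unfolding p_split by (simp add: distrib_left sum_distrib_left)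
  also have "\<dots> \<le> gamma_sum N K q K"
    unfolding q_split using head sum_mono[OF shifted] by (rule add_mono)
  finally show ?thesis .
qed

subsection \<open>Equal-revenue values\<close>

definition equal_revenue_vals :: "nat \<Rightarrow> (nat \<Rightarrow> real) \<Rightarrow> nat \<Rightarrow> real" where
  "equal_revenue_vals K p i = p K / (\<Sum>j=i..K. p j)"

lemma valid_vals_equal_revenue:
  assumes vp: "valid_prob K p" and "p K = 1 / r" "r > 0" "K \<ge> 1"
  shows "valid_vals r K (equal_revenue_vals K p)"
  unfolding valid_vals_def equal_revenue_vals_def
proof (intro conjI ballI)
  show "0 < p K / (\<Sum>j=1..K. p j)" using vp assms unfolding valid_prob_def by auto
  show "p K / (\<Sum>j=K..K. p j) \<le> r * (p K / (\<Sum>j=1..K. p j))"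
    using vp assms unfolding valid_prob_def by simp
  fix i assume i: "i \<in> {1..<K}"
  have "(\<Sum>j=i..K. p j) = p i + (\<Sum>j=Suc i..K. p j)" using i by (simp add: sum.atLeast_Suc_atMost)
  moreover have "p i > 0" "p K > 0" "(\<Sum>j=Suc i..K. p j) > 0"
    using vp i tail_mass_pos[OF vp, of "Suc i"] unfolding valid_prob_def by auto
  ultimately show "p K / (\<Sum>j=i..K. p j) < p K / (\<Sum>j=Suc i..K. p j)"
    by (intro divide_strict_left_mono) auto
qed

lemma reserve_index_equal_revenue:
  assumes "valid_prob K p" "K \<ge> 1"
  shows "reserve_index K (equal_revenue_vals K p) p = K"
proof -
  have "revenue K (equal_revenue_vals K p) p k = p K" if "k \<in> {1..K}" for k
    using tail_mass_pos[OF assms(1), of k] that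
    unfolding revenue_def equal_revenue_vals_def by simp
  then have "{i \<in> {1..K}. \<forall>k\<in>{1..K}. revenue K (equal_revenue_vals K p) p k
      \<le> revenue K (equal_revenue_vals K p) p i} = {1..K}" by auto
  moreover have "Max {1..K} = K" using assms(2) by (intro Max_eqI) auto
  ultimately show ?thesis unfolding reserve_index_def by simp
qed

lemma ELR_equal_revenue:
  assumes vp: "valid_prob K p" and "p K = u" "K \<ge> 1"
  shows "ELR N K (equal_revenue_vals K p) p
      = gamma_sum N K p K / (gamma_sum N K p K + (1 - (1 - u) ^ N) / u)"
proof -
  let ?x = "equal_revenue_vals K p"
  have u: "u > 0" using vp assms unfolding valid_prob_def by auto
  have lost: "(\<Sum>i=1..<K. zprob N p i * ?x i) = u * gamma_sum N K p K"
    unfolding gamma_sum_def sum_distrib_left equal_revenue_vals_def using assms by (simp add: mult.commute)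
  have "mass_below p K = 1 - u" using tail_mass_eq[OF vp, of K] assms by simp
  then have "zprob N p K * ?x K = 1 - (1 - u) ^ N"
    using mass_below_total[OF vp] u assms unfolding zprob_eq_mass_below equal_revenue_vals_def by simp
  moreover have "{1..K} = insert K {1..<K}" using assms by auto
  ultimately have total: "(\<Sum>i=1..K. zprob N p i * ?x i) = u * gamma_sum N K p K + (1 - (1 - u) ^ N)"
    using lost by simp
  show ?thesis
    unfolding ELR_def reserve_index_equal_revenue[OF vp \<open>K \<ge> 1\<close>] lost total
    using u by (simp add: field_simps)
qed

lemma gamma_star_eq_Sup: "K \<ge> 1 \<Longrightarrow> gamma_star r K N = Sup (gamma_values r K N)"
proof -
  assume "K \<ge> 1"
  then have "{1..K-1} = {1..<K}" by auto
  then show ?thesis unfolding gamma_star_def gamma_values_def gamma_sum_def by simp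
qed

lemma gamma_values_nonempty:
  assumes "r > 1" "K \<ge> 2"
  shows "gamma_values r K N \<noteq> {}"
proof -
  define p where "p = (\<lambda>j::nat. if j < K then (1 - 1 / r) / real (K - 1) else 1 / r)"
  have "{1..K} = insert K {1..<K}" using assms by auto
  then have "valid_prob K p" unfolding valid_prob_def p_def using assms by auto
  moreover have "p K = 1 / r" unfolding p_def by simp
  ultimately show ?thesis unfolding gamma_values_def by blast
qed

lemma gamma_values_bdd_above: "r > 0 \<Longrightarrow> K \<ge> 1 \<Longrightarrow> bdd_above (gamma_values r K N)"
  unfolding gamma_values_def bdd_above_def using gamma_sum_le by (intro exI[of _ r]) force

lemma gamma_values_nonneg: "g \<in> gamma_values r K N \<Longrightarrow> g \<ge> 0"
  unfolding gamma_values_def using gamma_sum_nonneg by fastforce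

lemma one_minus_power_ratio_le:
  fixes u s :: real
  assumes "0 < u" "u \<le> s" "s < 1"
  shows "s * ((1 - (1 - u) ^ N) / u) \<le> (1 - (1 - s) ^ N) * ((1 - u) / (1 - s)) ^ N"
proof -
  have "s * (1 - (1 - u) ^ N) * (1 - s) ^ N \<le> u * (1 - (1 - s) ^ N) * (1 - u) ^ N"
    using one_minus_power_cross_le[of "1 - s" "1 - u" N] assms by (simp add: mult_ac)
  then show ?thesis using assms by (simp add: field_simps power_divide)
qed

lemma le_Sup_gamma_values:
  "r > 0 \<Longrightarrow> K \<ge> 1 \<Longrightarrow> g \<in> gamma_values r K N \<Longrightarrow> g \<le> Sup (gamma_values r K N)"
  using gamma_values_bdd_above by (intro cSup_upper)

lemma Sup_gamma_values_nonneg: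
  assumes "r > 1" "K \<ge> 2"
  shows "Sup (gamma_values r K N) \<ge> 0"
proof -
  obtain g where g: "g \<in> gamma_values r K N" using gamma_values_nonempty[OF assms] by blast
  then show ?thesis using le_Sup_gamma_values[of r K g N] gamma_values_nonneg[OF g] assms by simp
qed

lemma scaled_gamma_sum_le_Sup:
  assumes r: "r > 1" and "N \<ge> 1" and vp: "valid_prob K p" and t: "2 \<le> t" "t \<le> K"
    and s: "1 / r \<le> 1 - mass_below p t"
  shows "((1 - 1 / r) / mass_below p t) ^ N * gamma_sum N K p t \<le> Sup (gamma_values r K N)"
proof -
  define lam where "lam = (1 - 1 / r) / mass_below p t"
  have "mass_below p 2 \<le> mass_below p t" using mass_below_mono[OF vp, of 2 t] t by simp
  moreover have "p 1 > 0" using vp t unfolding valid_prob_def by auto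
  ultimately have L: "mass_below p t > 0" using mass_below_2[of p] by simp
  have lam: "lam \<ge> 1" "lam * mass_below p t = 1 - 1 / r"
    using s L unfolding lam_def by (auto simp: field_simps)
  have "valid_prob K (stretch_prob K t lam (1 / r) p)"
    using valid_prob_stretch[OF vp t _ _ lam(2)] lam(1) r by simp
  then have "gamma_sum N K (stretch_prob K t lam (1 / r) p) K \<in> gamma_values r K N"
    using stretch_prob_last[OF t] unfolding gamma_values_def by blast
  then show ?thesis
    using gamma_sum_stretch_ge[OF vp t _ lam(1) \<open>N \<ge> 1\<close> lam(2)] le_Sup_gamma_values[of r K] r t
    unfolding lam_def by force
qed

lemma ELR_le_gamma_star_frac:
  assumes r: "r > 1" and N: "N \<ge> 1" and K: "K \<ge> 2"
    and vp: "valid_prob K p" and vv: "valid_vals r K x"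
  defines "\<Gamma> \<equiv> Sup (gamma_values r K N)"
  defines "c \<equiv> (1 - (1 - 1 / r) ^ N) / (1 / r)"
  shows "ELR N K x p \<le> \<Gamma> / (\<Gamma> + c)"
proof -
  define t where "t = reserve_index K x p"
  define s where "s = (\<Sum>j=t..K. p j)"
  have t: "1 \<le> t" "t \<le> K" using reserve_index_maximal[of K x p] K unfolding t_def by auto
  have "1 \<le> r * s" using reserve_tail_mass_ge[OF vp vv] K unfolding s_def t_def by simp
  then have "1 / r \<le> s" using r by (simp add: field_simps)
  moreover have "s = 1 - mass_below p t" using tail_mass_eq[OF vp, of t] t unfolding s_def by simp
  ultimately have s: "1 / r \<le> s" "s = 1 - mass_below p t" by simp_all
  have c: "c > 0" using one_minus_power_pos[of "1 / r" N] r N unfolding c_def by simp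
  have \<Gamma>: "\<Gamma> \<ge> 0" using Sup_gamma_values_nonneg[OF r K] unfolding \<Gamma>_def .
  have ELR: "ELR N K x p \<le> s * gamma_sum N K p t / (s * gamma_sum N K p t + (1 - (1 - s) ^ N))"
    using ELR_le_reserve_bound[OF vp vv N] K unfolding s_def t_def by simp
  show ?thesis
  proof (cases "t = 1")
    case True
    then have "ELR N K x p \<le> 0" using ELR unfolding gamma_sum_def by simp
    also have "0 \<le> \<Gamma> / (\<Gamma> + c)" using \<Gamma> c by simp
    finally show ?thesis .
  next
    case False
    define lam where "lam = (1 - 1 / r) / (1 - s)"
    have stretched: "lam ^ N * gamma_sum N K p t \<le> \<Gamma>"
      using scaled_gamma_sum_le_Sup[OF r N vp _ t(2)] s t False unfolding lam_def \<Gamma>_def by simp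
    have s1: "s < 1"
      using mass_below_mono[OF vp, of 2 t] mass_below_2[of p] vp K t False s
      unfolding valid_prob_def by force
    have s0: "0 < s" using r s(1) by (smt (verit) divide_pos_pos)
    then have D: "1 - (1 - s) ^ N > 0" using one_minus_power_pos[of s N] s1 N by simp
    have "s * gamma_sum N K p t * c = gamma_sum N K p t * (s * c)" by simp
    also have "\<dots> \<le> gamma_sum N K p t * ((1 - (1 - s) ^ N) * lam ^ N)"
      using one_minus_power_ratio_le[of "1 / r" s N] s s1 r gamma_sum_nonneg[OF vp, of t N] t
      unfolding c_def lam_def by (intro mult_left_mono) (auto simp: mult.commute)
    also have "\<dots> \<le> \<Gamma> * (1 - (1 - s) ^ N)"
      using stretched D by (simp add: mult.commute mult.left_commute mult_right_mono)
    finally have "s * gamma_sum N K p t / (s * gamma_sum N K p t + (1 - (1 - s) ^ N)) \<le> \<Gamma> / (\<Gamma> + c)"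
      using gamma_sum_nonneg[OF vp, of t N] t s0 \<Gamma> c D by (intro frac_add_le_frac_add) auto
    with ELR show ?thesis by linarith
  qed
qed

theorem proposition6:
  fixes r :: real and K N :: nat
  assumes "r > 1" and "N \<ge> 1" and "K \<ge> 2"
  shows "eta r K N = gamma_star r K N /
           ((r ^ N - (r - 1) ^ N) / r ^ (N - 1) + gamma_star r K N)"
proof -
  define c where "c = (1 - (1 - 1 / r) ^ N) / (1 / r)"
  define E where "E = {ELR N K x p | x p. valid_prob K p \<and> valid_vals r K x}"
  have c: "c > 0" "(r ^ N - (r - 1) ^ N) / r ^ (N - 1) = c"
    using one_minus_power_pos[of "1 / r" N] power_diff_div_power_eq[of r N] assms
    unfolding c_def by auto
  have upper: "e \<le> Sup (gamma_values r K N) / (Sup (gamma_values r K N) + c)" if "e \<in> E" for e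
    using that ELR_le_gamma_star_frac[OF assms] unfolding E_def c_def by blast
  have lower: "g / (g + c) \<in> E" if g: "g \<in> gamma_values r K N" for g
  proof -
    obtain p where p: "valid_prob K p" "p K = 1 / r" "g = gamma_sum N K p K"
      using g unfolding gamma_values_def by blast
    then have "valid_vals r K (equal_revenue_vals K p)"
      using valid_vals_equal_revenue assms by simp
    moreover have "ELR N K (equal_revenue_vals K p) p = g / (g + c)"
      using ELR_equal_revenue[OF p(1,2), of N] p(3) assms unfolding c_def by simp
    ultimately show ?thesis using p(1) unfolding E_def by (metis (mono_tags, lifting) mem_Collect_eq)
  qed
  have "Sup E = Sup (gamma_values r K N) / (Sup (gamma_values r K N) + c)"
    using assms by (intro Sup_eq_frac_Sup c(1) gamma_values_nonempty gamma_values_bdd_above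
        upper lower gamma_values_nonneg) auto
  moreover have "gamma_star r K N = Sup (gamma_values r K N)"
    using assms by (intro gamma_star_eq_Sup) auto
  ultimately show ?thesis unfolding eta_def E_def[symmetric] c(2) by (simp add: add.commute)
qed

end
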